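(* Let $W=\tfrac12(\Xi_+-\Xi_-)$ be the half interface width of a traveling wave with speed $\Omega\neq0$, so that $W$ satisfies the traveling-wave interface condition $$\frac{2(1-\kappa)^2}{\tau|\Omega|\delta}+\frac{1-\kappa}{\tau|\Omega|}\,2W=\exp\Big(\frac{1-\kappa}{\kappa\,\tau|\Omega|}\,2W\Big)-1 ,$$ and consider the spectral equation characterizing eigenvalues $\lambda$ with $\mathrm{Re}(\tau\lambda)>-1$, $$1-\exp\Big(-\frac{\kappa\tau\lambda+\kappa-1}{\kappa\,\tau|\Omega|}\,2W\Big)=\frac{(\kappa\tau\lambda+\kappa)(\kappa\tau\lambda+\kappa-1)(\kappa\tau\lambda+\kappa-1+2W)}{\kappa\,\tau|\Omega|}.$$ Using the interface condition together with the rescaling $$\mu=\frac{\tau\lambda}{\varepsilon},\qquad \varepsilon=\frac{\tau|\Omega|}{2W},$$ this spectral equation can be written as $$\exp(+\mu)=-\frac{\kappa}{\delta}\,\frac{2(1-\kappa)^2+(1-\kappa)\,\delta\,2W+\tau|\Omega|\delta}{(\kappa\varepsilon\mu+\kappa)(\kappa\varepsilon\mu+\kappa-1)(\kappa\varepsilon\mu+\kappa-1+2W)-\kappa\,\tau|\Omega|}.$$ Moreover, the right hand side converges for $\tau\to0$ and pointwise in $\mu$ to $-2/\delta$.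
   Context: Mean-field model $\tau\,\partial_t x(t,p)=\sigma(t)+\delta(p-\tfrac12)-H'(x(t,p))$, $p\in[0,1]$, with constraint $\int_0^1 x(t,p)\,dp=\ell(t)$, disorder strength $\delta>0$, relaxation time $\tau>0$, and trilinear $H'(x)=x+1$ for $x\le-\kappa$, $H'(x)=-\frac{1-\kappa}{\kappa}x$ for $|x|\le\kappa$, $H'(x)=x-1$ for $x\ge\kappa$, with $0<\kappa<1$. Traveling waves $x(t,p)=X(p-\Omega t)$ have interface positions $\Xi_-<\Xi_+$ (where the profile crosses $-\kappa$ and $+\kappa$) and exist when the interface condition above holds; this gives $W$ of order $\tau\ln(1/\tau)$ and hence $\varepsilon$ of order $1/\ln(1/\tau)$ as $\tau\to0$. Linearizing around the wave in the comoving frame gives the eigenvalue problem $\tau\lambda Z(P)=\tau\Omega Z'(P)-Z(P)+\kappa^{-1}\Psi(P)Z(P)-\kappa^{-1}\int\Psi(Q)Z(Q)\,dQ$ with $\Psi$ the indicator of $|P|<W$; its eigenvalues with $\mathrm{Re}(\tau\lambda)>-1$ are exactly the solutions of the spectral equation above with $\tau\lambda\neq(1-\kappa)/\kappa$. *)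

theory Defs
  imports "HOL-Analysis.Analysis"
begin

definition interface_cond :: "real \<Rightarrow> real \<Rightarrow> real \<Rightarrow> real \<Rightarrow> real \<Rightarrow> bool" where
  "interface_cond \<kappa> \<delta> \<tau> \<Omega> W \<longleftrightarrow>
     2 * (1 - \<kappa>)^2 / (\<tau> * \<bar>\<Omega>\<bar> * \<delta>) + (1 - \<kappa>) / (\<tau> * \<bar>\<Omega>\<bar>) * (2 * W)
       = exp ((1 - \<kappa>) / (\<kappa> * \<tau> * \<bar>\<Omega>\<bar>) * (2 * W)) - 1"

definition spectral_eq :: "real \<Rightarrow> real \<Rightarrow> real \<Rightarrow> real \<Rightarrow> complex \<Rightarrow> bool" where
  "spectral_eq \<kappa> \<tau> \<Omega> W lam \<longleftrightarrow>
     1 - exp (- (of_real \<kappa> * of_real \<tau> * lam + of_real \<kappa> - 1)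
                 / of_real (\<kappa> * \<tau> * \<bar>\<Omega>\<bar>) * of_real (2 * W))
     = (of_real \<kappa> * of_real \<tau> * lam + of_real \<kappa>)
       * (of_real \<kappa> * of_real \<tau> * lam + of_real \<kappa> - 1)
       * (of_real \<kappa> * of_real \<tau> * lam + of_real \<kappa> - 1 + of_real (2 * W))
       / of_real (\<kappa> * \<tau> * \<bar>\<Omega>\<bar>)"

definition eps_scale :: "real \<Rightarrow> real \<Rightarrow> real \<Rightarrow> real" where
  "eps_scale \<tau> \<Omega> W = \<tau> * \<bar>\<Omega>\<bar> / (2 * W)"

definition rescaled_rhs :: "real \<Rightarrow> real \<Rightarrow> real \<Rightarrow> real \<Rightarrow> real \<Rightarrow> complex \<Rightarrow> complex" where
  "rescaled_rhs \<kappa> \<delta> \<tau> \<Omega> W \<mu> =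
     (let \<epsilon> = of_real (eps_scale \<tau> \<Omega> W); k = of_real \<kappa> in
      - (k / of_real \<delta>)
      * of_real (2 * (1 - \<kappa>)^2 + (1 - \<kappa>) * \<delta> * (2 * W) + \<tau> * \<bar>\<Omega>\<bar> * \<delta>)
      / ((k * \<epsilon> * \<mu> + k) * (k * \<epsilon> * \<mu> + k - 1) * (k * \<epsilon> * \<mu> + k - 1 + of_real (2 * W))
         - of_real (\<kappa> * \<tau> * \<bar>\<Omega>\<bar>)))"

end

theory Submission
  imports Defs "HOL-Real_Asymp.Real_Asymp"
begin

(* The interface condition says that E = exp ((1 - kappa) 2W / (kappa tau |Omega|)) equals
   1 + 2 (1 - kappa)^2 / (tau |Omega| delta) + (1 - kappa) 2W / (tau |Omega|).  Substituting this
   for E turns the spectral equation, 1 - E / exp mu = P / (kappa tau |Omega|) with P the cubic in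
   kappa tau lambda, into the rescaled equation after solving for exp mu.

   For the limit put x = (1 - kappa) 2W / (kappa tau |Omega|) and
   c = 2 (1 - kappa)^2 / (tau |Omega| delta), so that the interface condition reads
   c + kappa x = exp x - 1.  Hence x^2 <= 2c, i.e. W = O(sqrt tau), and ln c <= x, i.e.
   epsilon = (1 - kappa) / (kappa x) = O(1 / ln (1 / tau)).  As tau, W and epsilon tend to 0,
   the right-hand side tends to -(kappa / delta) 2 (1 - kappa)^2 / (kappa (kappa - 1)^2) = -2 / delta. *)

lemma one_minus_divide_eq_divide_iff:
  fixes z e a p :: "'a::field"
  assumes "z \<noteq> 0" "e \<noteq> 0" "a \<noteq> 0"
  shows "1 - e / z = p / a \<longleftrightarrow> z = a * e / (a - p)"
proof (cases "a = p")
  case True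
  then show ?thesis using assms by simp
next
  case False
  then have "a - p \<noteq> 0" by simp
  with assms show ?thesis by (auto simp: field_simps)
qed

lemma exp_eq_affine_bounds:
  fixes c k x :: real
  assumes "c + k * x = exp x - 1" "0 \<le> k" "k \<le> 1" "0 \<le> x"
  shows "x^2 \<le> 2 * c" and "c \<le> exp x"
proof -
  have "1 + x + x^2 / 2 \<le> exp x"
    using assms(4) by (intro exp_lower_Taylor_quadratic)
  moreover have "k * x \<le> x" using assms(2-4) by (simp add: mult_left_le_one_le)
  ultimately show "x^2 \<le> 2 * c" using assms(1) by linarith
  show "c \<le> exp x" using assms(1,2,4) by (smt (verit) mult_nonneg_nonneg)
qed

lemma interface_cond_iff_exp:
  assumes "0 < \<delta>" "0 < \<tau>" "\<Omega> \<noteq> 0"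
  shows "interface_cond \<kappa> \<delta> \<tau> \<Omega> W \<longleftrightarrow>
    2 * (1 - \<kappa>)^2 + (1 - \<kappa>) * \<delta> * (2 * W) + \<tau> * \<bar>\<Omega>\<bar> * \<delta>
      = \<delta> * (\<tau> * \<bar>\<Omega>\<bar>) * exp ((1 - \<kappa>) / (\<kappa> * \<tau> * \<bar>\<Omega>\<bar>) * (2 * W))"
  using assms unfolding interface_cond_def by (auto simp: field_simps)

lemma interface_cond_iff_normalized:
  fixes \<kappa> \<delta> \<tau> \<Omega> W :: real
  assumes "0 < \<kappa>" "0 < \<tau>" "\<Omega> \<noteq> 0"
  defines "x \<equiv> (1 - \<kappa>) / (\<kappa> * \<tau> * \<bar>\<Omega>\<bar>) * (2 * W)"
    and "c \<equiv> 2 * (1 - \<kappa>)^2 / (\<tau> * \<bar>\<Omega>\<bar> * \<delta>)"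
  shows "interface_cond \<kappa> \<delta> \<tau> \<Omega> W \<longleftrightarrow> c + \<kappa> * x = exp x - 1"
proof -
  have "(1 - \<kappa>) / (\<tau> * \<bar>\<Omega>\<bar>) * (2 * W) = \<kappa> * x"
    using assms(1) by (simp add: x_def)
  then show ?thesis by (simp add: interface_cond_def c_def x_def mult.assoc)
qed

lemma spectral_eq_iff_rescaled:
  fixes lam :: complex
  assumes "0 < \<kappa>" "0 < \<delta>" "0 < \<tau>" "\<Omega> \<noteq> 0" "0 < W"
    and "interface_cond \<kappa> \<delta> \<tau> \<Omega> W"
  defines "\<mu> \<equiv> of_real \<tau> * lam / of_real (eps_scale \<tau> \<Omega> W)"
  shows "spectral_eq \<kappa> \<tau> \<Omega> W lam \<longleftrightarrow> exp \<mu> = rescaled_rhs \<kappa> \<delta> \<tau> \<Omega> W \<mu>"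
proof -
  define a where "a = \<tau> * \<bar>\<Omega>\<bar>"
  define x where "x = (1 - \<kappa>) / (\<kappa> * \<tau> * \<bar>\<Omega>\<bar>) * (2 * W)"
  define P :: complex where "P = (of_real \<kappa> * of_real \<tau> * lam + of_real \<kappa>)
    * (of_real \<kappa> * of_real \<tau> * lam + of_real \<kappa> - 1)
    * (of_real \<kappa> * of_real \<tau> * lam + of_real \<kappa> - 1 + of_real (2 * W))"
  have "a > 0" using assms by (simp add: a_def)
  have eps: "eps_scale \<tau> \<Omega> W = a / (2 * W)" by (simp add: eps_scale_def a_def)
  have \<mu>_eq: "\<mu> = of_real (2 * W / a) * of_real \<tau> * lam"
    using \<open>0 < W\<close> \<open>a > 0\<close> by (simp add: \<mu>_def eps field_simps)
  have exponent: "- (of_real \<kappa> * of_real \<tau> * lam + of_real \<kappa> - 1) / of_real (\<kappa> * \<tau> * \<bar>\<Omega>\<bar>)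
      * of_real (2 * W) = of_real x - \<mu>"
    using \<open>0 < \<kappa>\<close> \<open>0 < \<tau>\<close> \<open>\<Omega> \<noteq> 0\<close> unfolding \<mu>_eq by (simp add: x_def a_def field_simps)
  have spectral: "spectral_eq \<kappa> \<tau> \<Omega> W lam \<longleftrightarrow> 1 - of_real (exp x) / exp \<mu> = P / of_real (\<kappa> * a)"
    unfolding spectral_eq_def exponent exp_diff by (simp add: P_def a_def mult.assoc exp_of_real)
  have scaled: "of_real \<kappa> * of_real (eps_scale \<tau> \<Omega> W) * \<mu> = of_real \<kappa> * of_real \<tau> * lam"
    using \<open>0 < W\<close> \<open>a > 0\<close> unfolding \<mu>_eq eps by (simp add: field_simps)
  have numerator: "2 * (1 - \<kappa>)^2 + (1 - \<kappa>) * \<delta> * (2 * W) + \<tau> * \<bar>\<Omega>\<bar> * \<delta> = \<delta> * a * exp x"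
    using assms interface_cond_iff_exp by (simp add: a_def x_def mult.assoc)
  have "rescaled_rhs \<kappa> \<delta> \<tau> \<Omega> W \<mu>
      = - (of_real \<kappa> / of_real \<delta>) * of_real (\<delta> * a * exp x) / (P - of_real (\<kappa> * a))"
    unfolding rescaled_rhs_def Let_def scaled numerator by (simp add: P_def a_def)
  also have "\<dots> = - (of_real (\<kappa> * a) * of_real (exp x)) / (P - of_real (\<kappa> * a))"
    using \<open>0 < \<delta>\<close> by simp
  also have "\<dots> = of_real (\<kappa> * a) * of_real (exp x) / (of_real (\<kappa> * a) - P)"
    by (metis divide_minus_right minus_diff_eq minus_divide_left)
  finally show ?thesis
    unfolding spectral using assms \<open>a > 0\<close> by (simp add: one_minus_divide_eq_divide_iff)
qed

lemma interface_width_sq_le: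
  assumes "0 < \<kappa>" "\<kappa> < 1" "0 < \<delta>" "0 < \<tau>" "\<Omega> \<noteq> 0" "0 < W"
    and "interface_cond \<kappa> \<delta> \<tau> \<Omega> W"
  shows "W^2 \<le> \<kappa>^2 * \<bar>\<Omega>\<bar> / \<delta> * \<tau>"
proof -
  define a where "a = \<tau> * \<bar>\<Omega>\<bar>"
  define x where "x = (1 - \<kappa>) / (\<kappa> * \<tau> * \<bar>\<Omega>\<bar>) * (2 * W)"
  define c where "c = 2 * (1 - \<kappa>)^2 / (\<tau> * \<bar>\<Omega>\<bar> * \<delta>)"
  have "a > 0" using assms by (simp add: a_def)
  have c_eq: "c = 2 * (1 - \<kappa>)^2 / (a * \<delta>)" by (simp add: c_def a_def)
  have "c + \<kappa> * x = exp x - 1"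
    unfolding x_def c_def by (rule iffD1[OF interface_cond_iff_normalized]) (use assms in auto)
  then have "x^2 \<le> 2 * c"
    by (rule exp_eq_affine_bounds(1)) (use assms in \<open>auto simp: x_def\<close>)
  have W_eq: "W = \<kappa> * a / (2 * (1 - \<kappa>)) * x"
    using assms by (simp add: x_def a_def field_simps)
  have "W^2 = (\<kappa> * a / (2 * (1 - \<kappa>)))^2 * x^2"
    unfolding W_eq by (rule power_mult_distrib)
  also have "\<dots> \<le> (\<kappa> * a / (2 * (1 - \<kappa>)))^2 * (2 * c)"
    using \<open>x^2 \<le> 2 * c\<close> by (simp add: mult_left_mono)
  also have "\<dots> = \<kappa>^2 * a / \<delta>"
  proof -
    have scale: "(\<kappa> * a / (2 * m))^2 * (2 * (2 * m^2 / (a * \<delta>))) = \<kappa>^2 * a / \<delta>" if "m \<noteq> 0" for m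
      using that \<open>a > 0\<close> \<open>0 < \<delta>\<close> by (simp add: power2_eq_square field_simps)
    show ?thesis unfolding c_eq by (rule scale) (use \<open>\<kappa> < 1\<close> in simp)
  qed
  finally show ?thesis by (simp add: a_def mult_ac)
qed

lemma eps_scale_le_inverse_ln:
  assumes "0 < \<kappa>" "\<kappa> < 1" "0 < \<delta>" "0 < \<tau>" "\<Omega> \<noteq> 0" "0 < W"
    and "interface_cond \<kappa> \<delta> \<tau> \<Omega> W"
    and "\<tau> < 2 * (1 - \<kappa>)^2 / (\<bar>\<Omega>\<bar> * \<delta>)"
  shows "eps_scale \<tau> \<Omega> W \<le> (1 - \<kappa>) / (\<kappa> * ln (2 * (1 - \<kappa>)^2 / (\<bar>\<Omega>\<bar> * \<delta>) / \<tau>))"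
proof -
  define x where "x = (1 - \<kappa>) / (\<kappa> * \<tau> * \<bar>\<Omega>\<bar>) * (2 * W)"
  define c where "c = 2 * (1 - \<kappa>)^2 / (\<tau> * \<bar>\<Omega>\<bar> * \<delta>)"
  have "x > 0" using assms by (simp add: x_def)
  have c_eq: "c = 2 * (1 - \<kappa>)^2 / (\<bar>\<Omega>\<bar> * \<delta>) / \<tau>" by (simp add: c_def field_simps)
  have "c > 1" unfolding c_eq less_divide_eq_1_pos[OF assms(4)] by (rule assms(8))
  have "c + \<kappa> * x = exp x - 1"
    unfolding x_def c_def by (rule iffD1[OF interface_cond_iff_normalized]) (use assms in auto)
  then have "c \<le> exp x"
    by (rule exp_eq_affine_bounds(2)) (use assms \<open>x > 0\<close> in auto)
  then have "ln c \<le> x" using ln_le_cancel_iff[of c "exp x"] \<open>c > 1\<close> by simp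
  have "eps_scale \<tau> \<Omega> W = (1 - \<kappa>) / (\<kappa> * x)"
    using assms by (simp add: eps_scale_def x_def field_simps)
  also have "\<dots> \<le> (1 - \<kappa>) / (\<kappa> * ln c)"
    using assms \<open>ln c \<le> x\<close> \<open>c > 1\<close> \<open>x > 0\<close> by (intro divide_left_mono mult_left_mono mult_pos_pos) auto
  finally show ?thesis unfolding c_eq .
qed

lemma interface_width_tendsto_zero:
  assumes "0 < \<kappa>" "\<kappa> < 1" "0 < \<delta>" "\<Omega> \<noteq> 0"
    and "\<forall>\<^sub>F \<tau> in at_right 0. 0 < Wf \<tau> \<and> interface_cond \<kappa> \<delta> \<tau> \<Omega> (Wf \<tau>)"
  shows "(Wf \<longlongrightarrow> 0) (at_right 0)"
proof (rule tendsto_sandwich)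
  show "\<forall>\<^sub>F \<tau> in at_right 0. 0 \<le> Wf \<tau>"
    using assms(5) by eventually_elim auto
  show "\<forall>\<^sub>F \<tau> in at_right 0. Wf \<tau> \<le> sqrt (\<kappa>^2 * \<bar>\<Omega>\<bar> / \<delta> * \<tau>)"
    using assms(5) eventually_at_right_less[of 0] proof eventually_elim
    case (elim \<tau>)
    then show ?case
      using interface_width_sq_le[OF assms(1-3) _ assms(4)] by (auto intro: real_le_rsqrt)
  qed
  show "((\<lambda>\<tau>. sqrt (\<kappa>^2 * \<bar>\<Omega>\<bar> / \<delta> * \<tau>)) \<longlongrightarrow> 0) (at_right 0)"
    by (rule tendsto_eq_intros refl)+ simp
qed simp

lemma eps_scale_tendsto_zero:
  assumes "0 < \<kappa>" "\<kappa> < 1" "0 < \<delta>" "\<Omega> \<noteq> 0"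
    and "\<forall>\<^sub>F \<tau> in at_right 0. 0 < Wf \<tau> \<and> interface_cond \<kappa> \<delta> \<tau> \<Omega> (Wf \<tau>)"
  shows "((\<lambda>\<tau>. eps_scale \<tau> \<Omega> (Wf \<tau>)) \<longlongrightarrow> 0) (at_right 0)"
proof (rule tendsto_sandwich)
  define K where "K = 2 * (1 - \<kappa>)^2 / (\<bar>\<Omega>\<bar> * \<delta>)"
  have "K > 0" using assms by (simp add: K_def)
  have small: "\<forall>\<^sub>F \<tau> in at_right 0. 0 < \<tau> \<and> \<tau> < K"
    using \<open>K > 0\<close> eventually_at_right_less[of 0] eventually_at_right_field by fastforce
  show "\<forall>\<^sub>F \<tau> in at_right 0. 0 \<le> eps_scale \<tau> \<Omega> (Wf \<tau>)"
    using assms(5) small by eventually_elim (simp add: eps_scale_def)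
  show "\<forall>\<^sub>F \<tau> in at_right 0. eps_scale \<tau> \<Omega> (Wf \<tau>) \<le> (1 - \<kappa>) / (\<kappa> * ln (K / \<tau>))"
    using assms(5) small by eventually_elim
      (use eps_scale_le_inverse_ln[OF assms(1-3) _ assms(4)] in \<open>auto simp: K_def\<close>)
  show "((\<lambda>\<tau>. (1 - \<kappa>) / (\<kappa> * ln (K / \<tau>))) \<longlongrightarrow> 0) (at_right 0)"
    using \<open>K > 0\<close> \<open>0 < \<kappa>\<close> by real_asymp
qed simp

lemma rescaled_rhs_tendsto:
  fixes \<mu> :: complex
  assumes "0 < \<kappa>" "\<kappa> < 1" "0 < \<delta>"
    and "(t \<longlongrightarrow> 0) F" "(w \<longlongrightarrow> 0) F" "((\<lambda>s. eps_scale (t s) \<Omega> (w s)) \<longlongrightarrow> 0) F"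
  shows "((\<lambda>s. rescaled_rhs \<kappa> \<delta> (t s) \<Omega> (w s) \<mu>) \<longlongrightarrow> - 2 / of_real \<delta>) F"
proof -
  define k :: complex where "k = of_real \<kappa>"
  have "k \<noteq> 0" "k - 1 \<noteq> 0" using assms(1,2) by (auto simp: k_def)
  have "((\<lambda>s. rescaled_rhs \<kappa> \<delta> (t s) \<Omega> (w s) \<mu>) \<longlongrightarrow>
      - (k / of_real \<delta>) * of_real (2 * (1 - \<kappa>)^2) / (k * (k - 1) * (k - 1))) F"
    unfolding rescaled_rhs_def Let_def k_def[symmetric]
    using \<open>k \<noteq> 0\<close> \<open>k - 1 \<noteq> 0\<close> \<open>0 < \<delta>\<close> by (auto intro!: tendsto_eq_intros assms(4-6))
  also have "- (k / of_real \<delta>) * of_real (2 * (1 - \<kappa>)^2) / (k * (k - 1) * (k - 1)) = - 2 / of_real \<delta>"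
  proof -
    have cancel: "- (k / d) * (2 * m) / (k * m) = - 2 / d" if "m \<noteq> 0" "d \<noteq> 0" for d m :: complex
      using that \<open>k \<noteq> 0\<close> by (simp add: field_simps)
    have "of_real (2 * (1 - \<kappa>)^2) = 2 * ((k - 1) * (k - 1))"
      by (simp add: k_def power2_eq_square algebra_simps)
    then show ?thesis
      unfolding mult.assoc[of k] by (simp only:) (rule cancel, use \<open>k - 1 \<noteq> 0\<close> \<open>0 < \<delta>\<close> in auto)
  qed
  finally show ?thesis .
qed

theorem lemma2p3:
  fixes \<kappa> \<delta> \<Omega> :: real
  assumes "0 < \<kappa>" and "\<kappa> < 1" and "0 < \<delta>" and "\<Omega> \<noteq> 0"
  shows "(\<forall>\<tau> W (lam::complex). 0 < \<tau> \<longrightarrow> 0 < W \<longrightarrow> interface_cond \<kappa> \<delta> \<tau> \<Omega> W \<longrightarrow>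
            (spectral_eq \<kappa> \<tau> \<Omega> W lam \<longleftrightarrow>
             (let \<mu> = of_real \<tau> * lam / of_real (eps_scale \<tau> \<Omega> W)
              in exp \<mu> = rescaled_rhs \<kappa> \<delta> \<tau> \<Omega> W \<mu>)))
       \<and> (\<forall>Wf :: real \<Rightarrow> real.
            (\<forall>\<tau>>0. 0 < Wf \<tau> \<and> interface_cond \<kappa> \<delta> \<tau> \<Omega> (Wf \<tau>)) \<longrightarrow>
            (\<forall>\<mu>::complex. ((\<lambda>\<tau>. rescaled_rhs \<kappa> \<delta> \<tau> \<Omega> (Wf \<tau>) \<mu>)
                              \<longlongrightarrow> - 2 / of_real \<delta>) (at_right 0)))"
proof (intro conjI allI impI)
  fix \<tau> W :: real and lam :: complex
  assume "0 < \<tau>" "0 < W" "interface_cond \<kappa> \<delta> \<tau> \<Omega> W"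
  with assms show "spectral_eq \<kappa> \<tau> \<Omega> W lam \<longleftrightarrow>
      (let \<mu> = of_real \<tau> * lam / of_real (eps_scale \<tau> \<Omega> W) in exp \<mu> = rescaled_rhs \<kappa> \<delta> \<tau> \<Omega> W \<mu>)"
    unfolding Let_def by (intro spectral_eq_iff_rescaled) auto
next
  fix Wf :: "real \<Rightarrow> real" and \<mu> :: complex
  assume "\<forall>\<tau>>0. 0 < Wf \<tau> \<and> interface_cond \<kappa> \<delta> \<tau> \<Omega> (Wf \<tau>)"
  then have wave: "\<forall>\<^sub>F \<tau> in at_right 0. 0 < Wf \<tau> \<and> interface_cond \<kappa> \<delta> \<tau> \<Omega> (Wf \<tau>)"
    using eventually_at_right_less[of "0::real"] by (auto elim: eventually_mono)
  show "((\<lambda>\<tau>. rescaled_rhs \<kappa> \<delta> \<tau> \<Omega> (Wf \<tau>) \<mu>) \<longlongrightarrow> - 2 / of_real \<delta>) (at_right 0)"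
    using assms by (intro rescaled_rhs_tendsto tendsto_ident_at
        interface_width_tendsto_zero[OF assms wave] eps_scale_tendsto_zero[OF assms wave])
qed

end
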